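(* Let $f,g$ satisfy the standing assumptions below and let $\beta>0$. For any $(x,y)\in\mathcal{M}$, $(x,y)$ is a $\mathcal{D}_f$-stationary point of (BLO) if and only if $(x,y)$ is a $\mathcal{D}_h$-stationary point of (CDB), i.e. $0\in\mathcal{D}_h(x,y)$.
   Context: Standing assumptions. (A1) Constants $M_f,\mu,L_g,Q_g>0$ exist such that: $f:\mathbb{R}^n\times\mathbb{R}^p\to\mathbb{R}$ is $M_f$-Lipschitz; $g$ is twice differentiable with $\nabla^2_{yy}g\succeq\mu I_p$; $\nabla g$ is $L_g$-Lipschitz; $\nabla^2_{yy}g,\nabla^2_{xy}g$ are $Q_g$-Lipschitz; $\nabla^2_{yy}g$ is continuously differentiable ($\nabla^2_{xy}g\in\mathbb{R}^{n\times p}$ has entries $\partial^2g/\partial x_i\partial y_j$). (A2) $f$ is a potential function of a conservative field $\mathcal{D}_f$ with compact convex values of norm at most $M_f$. Notation: $\mathcal{M}:=\{(x,y):\nabla_yg(x,y)=0\}$; $H=\nabla^2_{yy}g(x,y)$; $\mathcal{A}(x,y):=y-H^{-1}\nabla_yg(x,y)$; $\nabla^3_{xyy}g(x,y)[d]:=\lim_{t\to0}\frac1t(\nabla^2_{xy}g(x,y+td)-\nabla^2_{xy}g(x,y))$, $\nabla^3_{yyy}g(x,y)[d]:=\lim_{t\to0}\frac1t(\nabla^2_{yy}g(x,y+td)-\nabla^2_{yy}g(x,y))$; $J_{A,x}:=-\nabla^2_{xy}gH^{-1}+\nabla^3_{xyy}g[H^{-1}\nabla_yg]H^{-1}$, $J_{A,y}:=\nabla^3_{yyy}g[H^{-1}\nabla_yg]H^{-1}$;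 $\mathcal{D}_h(x,y):=\{(d_x+J_{A,x}d_y+\beta\nabla^2_{xy}g\nabla_yg,\ J_{A,y}d_y+\beta H\nabla_yg):(d_x,d_y)\in\mathcal{D}_f(x,\mathcal{A}(x,y))\}$. $(x,y)$ is a $\mathcal{D}_f$-stationary point of (BLO) if there is $(d_x,d_y)\in\mathcal{D}_f(x,y)$ with $d_x-\nabla^2_{xy}g(x,y)H^{-1}d_y=0$ and $\nabla_yg(x,y)=0$. *)

theory Defs
  imports "HOL-Analysis.Analysis"
begin

definition abs_cont_on :: "real \<Rightarrow> real \<Rightarrow> (real \<Rightarrow> 'a::real_normed_vector) \<Rightarrow> bool" where
  "abs_cont_on a b \<gamma> \<longleftrightarrow>
     (\<forall>\<epsilon>>0. \<exists>\<delta>>0. \<forall>(n::nat) (l::nat \<Rightarrow> real) (r::nat \<Rightarrow> real).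
        (\<forall>i<n. a \<le> l i \<and> l i \<le> r i \<and> r i \<le> b) \<and>
        (\<forall>i<n. \<forall>j<n. i \<noteq> j \<longrightarrow> r i \<le> l j \<or> r j \<le> l i) \<and>
        (\<Sum>i<n. r i - l i) < \<delta>
        \<longrightarrow> (\<Sum>i<n. norm (\<gamma> (r i) - \<gamma> (l i))) < \<epsilon>)"

definition max_pairing :: "('a::euclidean_space \<Rightarrow> 'a set) \<Rightarrow> (real \<Rightarrow> 'a) \<Rightarrow> real \<Rightarrow> real" where
  "max_pairing D \<gamma> t = Sup ((\<lambda>v. inner (vector_derivative \<gamma> (at t)) v) ` D (\<gamma> t))"

definition conservative_field :: "('a::euclidean_space \<Rightarrow> 'a set) \<Rightarrow> bool" where
  "conservative_field D \<longleftrightarrow>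
     (\<forall>z. D z \<noteq> {} \<and> compact (D z)) \<and>
     closed {(z, v). v \<in> D z} \<and>
     (\<forall>\<gamma>. abs_cont_on 0 1 \<gamma> \<and> \<gamma> 0 = \<gamma> 1 \<longrightarrow>
        set_integrable lborel {0..1} (max_pairing D \<gamma>) \<and>
        (LINT t:{0..1}|lborel. max_pairing D \<gamma> t) = 0)"

definition potential_of :: "('a::euclidean_space \<Rightarrow> real) \<Rightarrow> ('a \<Rightarrow> 'a set) \<Rightarrow> bool" where
  "potential_of f D \<longleftrightarrow> conservative_field D \<and>
     (\<forall>\<gamma>. abs_cont_on 0 1 \<gamma> \<longrightarrow>
        set_integrable lborel {0..1} (max_pairing D \<gamma>) \<and>
        f (\<gamma> 1) = f (\<gamma> 0) + (LINT t:{0..1}|lborel. max_pairing D \<gamma> t))"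

definition grad_x :: "((real^'n) \<times> (real^'p) \<Rightarrow> real) \<Rightarrow> (real^'n) \<times> (real^'p) \<Rightarrow> real^'n" where
  "grad_x g z = (\<chi> i. frechet_derivative g (at z) (axis i 1, 0))"

definition grad_y :: "((real^'n) \<times> (real^'p) \<Rightarrow> real) \<Rightarrow> (real^'n) \<times> (real^'p) \<Rightarrow> real^'p" where
  "grad_y g z = (\<chi> j. frechet_derivative g (at z) (0, axis j 1))"

definition grad :: "((real^'n) \<times> (real^'p) \<Rightarrow> real) \<Rightarrow> (real^'n) \<times> (real^'p) \<Rightarrow> (real^'n) \<times> (real^'p)" where
  "grad g z = (grad_x g z, grad_y g z)"

definition hess_yy :: "((real^'n) \<times> (real^'p) \<Rightarrow> real) \<Rightarrow> (real^'n) \<times> (real^'p) \<Rightarrow> real^'p^'p" where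
  "hess_yy g z = (\<chi> i j. frechet_derivative (\<lambda>w. grad_y g w $ j) (at z) (0, axis i 1))"

definition hess_xy :: "((real^'n) \<times> (real^'p) \<Rightarrow> real) \<Rightarrow> (real^'n) \<times> (real^'p) \<Rightarrow> real^'p^'n" where
  "hess_xy g z = (\<chi> i j. frechet_derivative (\<lambda>w. grad_y g w $ j) (at z) (axis i 1, 0))"

definition d3_xyy :: "((real^'n) \<times> (real^'p) \<Rightarrow> real) \<Rightarrow> (real^'n) \<times> (real^'p) \<Rightarrow> real^'p \<Rightarrow> real^'p^'n" where
  "d3_xyy g z d = Lim (at (0::real))
      (\<lambda>t. (1 / t) *\<^sub>R (hess_xy g (fst z, snd z + t *\<^sub>R d) - hess_xy g z))"

definition d3_yyy :: "((real^'n) \<times> (real^'p) \<Rightarrow> real) \<Rightarrow> (real^'n) \<times> (real^'p) \<Rightarrow> real^'p \<Rightarrow> real^'p^'p" where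
  "d3_yyy g z d = Lim (at (0::real))
      (\<lambda>t. (1 / t) *\<^sub>R (hess_yy g (fst z, snd z + t *\<^sub>R d) - hess_yy g z))"

definition solution_manifold :: "((real^'n) \<times> (real^'p) \<Rightarrow> real) \<Rightarrow> ((real^'n) \<times> (real^'p)) set" where
  "solution_manifold g = {z. grad_y g z = 0}"

definition newton_map :: "((real^'n) \<times> (real^'p) \<Rightarrow> real) \<Rightarrow> (real^'n) \<times> (real^'p) \<Rightarrow> real^'p" where
  "newton_map g z = snd z - matrix_inv (hess_yy g z) *v grad_y g z"

definition J_Ax :: "((real^'n) \<times> (real^'p) \<Rightarrow> real) \<Rightarrow> (real^'n) \<times> (real^'p) \<Rightarrow> real^'p^'n" where
  "J_Ax g z = - (hess_xy g z ** matrix_inv (hess_yy g z))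
      + d3_xyy g z (matrix_inv (hess_yy g z) *v grad_y g z) ** matrix_inv (hess_yy g z)"

definition J_Ay :: "((real^'n) \<times> (real^'p) \<Rightarrow> real) \<Rightarrow> (real^'n) \<times> (real^'p) \<Rightarrow> real^'p^'p" where
  "J_Ay g z = d3_yyy g z (matrix_inv (hess_yy g z) *v grad_y g z) ** matrix_inv (hess_yy g z)"

definition D_h :: "((real^'n) \<times> (real^'p) \<Rightarrow> ((real^'n) \<times> (real^'p)) set) \<Rightarrow> ((real^'n) \<times> (real^'p) \<Rightarrow> real)
     \<Rightarrow> real \<Rightarrow> (real^'n) \<times> (real^'p) \<Rightarrow> ((real^'n) \<times> (real^'p)) set" where
  "D_h Df g \<beta> z =
     {(dx + J_Ax g z *v dy + \<beta> *\<^sub>R (hess_xy g z *v grad_y g z),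
       J_Ay g z *v dy + \<beta> *\<^sub>R (hess_yy g z *v grad_y g z)) | dx dy.
        (dx, dy) \<in> Df (fst z, newton_map g z)}"

definition Df_stationary_BLO :: "((real^'n) \<times> (real^'p) \<Rightarrow> ((real^'n) \<times> (real^'p)) set) \<Rightarrow> ((real^'n) \<times> (real^'p) \<Rightarrow> real)
     \<Rightarrow> (real^'n) \<times> (real^'p) \<Rightarrow> bool" where
  "Df_stationary_BLO Df g z \<longleftrightarrow>
     (\<exists>dx dy. (dx, dy) \<in> Df z \<and> dx - hess_xy g z *v (matrix_inv (hess_yy g z) *v dy) = 0)
     \<and> grad_y g z = 0"

definition Dh_stationary_CDB :: "((real^'n) \<times> (real^'p) \<Rightarrow> ((real^'n) \<times> (real^'p)) set) \<Rightarrow> ((real^'n) \<times> (real^'p) \<Rightarrow> real)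
     \<Rightarrow> real \<Rightarrow> (real^'n) \<times> (real^'p) \<Rightarrow> bool" where
  "Dh_stationary_CDB Df g \<beta> z \<longleftrightarrow> 0 \<in> D_h Df g \<beta> z"

end

theory Submission
  imports Defs
begin

text \<open>On the solution manifold the lower-level gradient vanishes. Hence the Newton map fixes
  the point, the third-derivative terms of J_Ax and J_Ay are taken in the zero direction and
  vanish, and every element of D_h becomes (d_x - hess_xy H^-1 d_y, 0) for some (d_x, d_y)
  in Df. The equivalence is then a rewriting of the definitions.\<close>

lemma uminus_matrix_vector_mult: "(- A) *v v = - (A *v v)"
  for A :: "real^'m^'k"
  by (simp add: matrix_vector_mult_def vec_eq_iff sum_negf)

lemma d3_xyy_zero_direction [simp]: "d3_xyy g z 0 = 0"
  unfolding d3_xyy_def by (simp add: tendsto_Lim tendsto_const)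

lemma d3_yyy_zero_direction [simp]: "d3_yyy g z 0 = 0"
  unfolding d3_yyy_def by (simp add: tendsto_Lim tendsto_const)

lemma grad_y_on_solution_manifold: "z \<in> solution_manifold g \<Longrightarrow> grad_y g z = 0"
  by (simp add: solution_manifold_def)

lemma newton_map_on_solution_manifold:
  "z \<in> solution_manifold g \<Longrightarrow> newton_map g z = snd z"
  by (simp add: newton_map_def grad_y_on_solution_manifold)

lemma J_Ax_on_solution_manifold:
  "z \<in> solution_manifold g \<Longrightarrow> J_Ax g z = - (hess_xy g z ** matrix_inv (hess_yy g z))"
  by (simp add: J_Ax_def grad_y_on_solution_manifold)

lemma J_Ay_on_solution_manifold: "z \<in> solution_manifold g \<Longrightarrow> J_Ay g z = 0"
  by (simp add: J_Ay_def grad_y_on_solution_manifold)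

lemma D_h_on_solution_manifold:
  assumes "z \<in> solution_manifold g"
  shows "D_h Df g \<beta> z =
    {(dx - hess_xy g z *v (matrix_inv (hess_yy g z) *v dy), 0) | dx dy. (dx, dy) \<in> Df z}"
proof -
  have element_eq: "(dx + J_Ax g z *v dy + \<beta> *\<^sub>R (hess_xy g z *v grad_y g z),
         J_Ay g z *v dy + \<beta> *\<^sub>R (hess_yy g z *v grad_y g z))
      = (dx - hess_xy g z *v (matrix_inv (hess_yy g z) *v dy), 0)" for dx dy
    using assms
    by (simp add: grad_y_on_solution_manifold J_Ax_on_solution_manifold
        J_Ay_on_solution_manifold uminus_matrix_vector_mult matrix_vector_mul_assoc)
  show ?thesis
    unfolding D_h_def element_eq newton_map_on_solution_manifold[OF assms] by simp
qed

theorem proposition3p5: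
  fixes f g :: "(real^'n) \<times> (real^'p) \<Rightarrow> real"
    and Df :: "(real^'n) \<times> (real^'p) \<Rightarrow> ((real^'n) \<times> (real^'p)) set"
    and Mf \<mu> Lg Qg \<beta> :: real
    and x :: "real^'n" and y :: "real^'p"
  assumes Mf_pos: "Mf > 0" and mu_pos: "\<mu> > 0" and Lg_pos: "Lg > 0" and Qg_pos: "Qg > 0"
    and f_lip: "Mf-lipschitz_on UNIV f"
    and g_diff: "\<forall>z. g differentiable (at z)"
    and g_twice: "\<forall>z. grad g differentiable (at z)"
    and hess_strong: "\<forall>z d. \<mu> * (d \<bullet> d) \<le> d \<bullet> (hess_yy g z *v d)"
    and grad_lip: "Lg-lipschitz_on UNIV (grad g)"
    and hyy_lip: "\<forall>z z'. onorm (\<lambda>v. (hess_yy g z - hess_yy g z') *v v) \<le> Qg * dist z z'"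
    and hxy_lip: "\<forall>z z'. onorm (\<lambda>v. (hess_xy g z - hess_xy g z') *v v) \<le> Qg * dist z z'"
    and hyy_C1: "\<exists>D :: (real^'n) \<times> (real^'p) \<Rightarrow> ((real^'n) \<times> (real^'p)) \<Rightarrow>\<^sub>L (real^'p^'p).
                   (\<forall>z. (hess_yy g has_derivative blinfun_apply (D z)) (at z)) \<and> continuous_on UNIV D"
    and f_pot: "potential_of f Df"
    and Df_convex: "\<forall>z. convex (Df z)"
    and Df_bound: "\<forall>z. \<forall>v\<in>Df z. norm v \<le> Mf"
    and beta_pos: "\<beta> > 0"
    and onM: "(x, y) \<in> solution_manifold g"
  shows "Df_stationary_BLO Df g (x, y) \<longleftrightarrow> Dh_stationary_CDB Df g \<beta> (x, y)"
  using onM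
  by (auto simp: Df_stationary_BLO_def Dh_stationary_CDB_def D_h_on_solution_manifold
      grad_y_on_solution_manifold zero_prod_def)

end
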